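(* Let $\varphi\in ICPCC^s_{loc}(\mathcal A^k,C^*_{\mathcal E}(\mathcal D))$, $m=[\frac{k+1}{2}]$, and let $(\{\pi_p\}_{p=1}^m,V,\{\mathcal K;\mathcal F;\mathcal G\})$ with $\mathcal F=\{\mathcal K_\ell:\ell\in\Omega\}$ be a Stinespring triple for $\varphi$. Then there exists another Stinespring triple $(\{\widetilde\pi_p\}_{p=1}^m,\widetilde V,\{\widetilde{\mathcal K};\widetilde{\mathcal F};\widetilde{\mathcal G}\})$ for $\varphi$, with $\widetilde{\mathcal F}=\{\widetilde{\mathcal K}_\ell:\ell\in\Omega\}$, such that $\widetilde{\mathcal K}_\ell\subseteq\mathcal K_\ell$ for every $\ell\in\Omega$ and $$\widetilde{\mathcal K}_\ell=\overline{\operatorname{span}}\{\widetilde\pi_1(a_1)\cdots\widetilde\pi_m(a_m)\widetilde Vh: a_1,\dots,a_m\in\mathcal A,\ h\in\mathcal H_\ell\}\quad\text{for every }\ell\in\Omega,$$ i.e. the new triple is minimal.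
   Context: Locally $C^*$-algebras. A locally $C^*$-algebra is a $*$-algebra complete in the locally convex topology given by an upward filtered family of $C^*$-seminorms. Throughout, $\mathcal A$ is a unital locally $C^*$-algebra with upward filtered family of $C^*$-seminorms $\{p_\alpha:\alpha\in\Lambda\}$. For $\alpha\in\Lambda$ let $\mathcal A_\alpha=\mathcal A/\{a:p_\alpha(a)=0\}$ (a $C^*$-algebra with the norm induced by $p_\alpha$) and $\pi_\alpha:\mathcal A\to\mathcal A_\alpha$ the quotient map. For $a,b$ write $a=_\alpha b$ if $p_\alpha(a-b)=0$, and $a\ge_\alpha 0$ if $\pi_\alpha(a)\ge 0$ in $\mathcal A_\alpha$. For $n\in\mathbb N$, $M_n(\mathcal A)$ is a locally $C^*$-algebra with $C^*$-seminorms $p^n_\alpha$ (the norm of the image in $M_n(\mathcal A_\alpha)$), and the notations $=_\alpha,\ge_\alpha$ apply to it; the same conventions ($=_\ell$, $\ge_\ell$) apply to any locally $C^*$-algebra whose seminorms are indexed by $\ell$. Quantized domains. A quantized domain is a triple $\{\mathcal H;\mathcal E;\mathcal D\}$ where $\mathcal H$ is a Hilbert space, $\mathcal E=\{\mathcal H_\ell:\ell\in\Omega\}$ is a family of closed subspaces indexed by a directed set $\Omega$ with $\mathcal H_\ell\subseteq\mathcal H_{\ell'}$ whenever $\ell\le\ell'$, and $\mathcal D=\bigcup_{\ell}\mathcal H_\ell$ is dense in $\mathcal H$. With $P_\ell$ the orthogonal projection onto $\mathcal H_\ell$, $C^*_{\mathcal E}(\mathcal D)$ is the set of linear operators $T:\mathcal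 D\to\mathcal D$ with $TP_\ell=P_\ell TP_\ell$ and $P_\ell T\subseteq TP_\ell$ for all $\ell$, with $T|_{\mathcal H_\ell}$ bounded; it is a unital locally $C^*$-algebra with involution $T^*:=T^{\bigstar}|_{\mathcal D}$ ($T^\bigstar$ the Hilbert space adjoint) and $C^*$-seminorms $\|T\|_\ell=\|T|_{\mathcal H_\ell}\|$, $\ell\in\Omega$. $M_n(C^*_{\mathcal E}(\mathcal D))$ is identified with $C^*_{\mathcal E^n}(\mathcal D^n)$ for the quantized domain $\{\mathcal H^n;\{\mathcal H_\ell^n\};\mathcal D^n\}$ (n-fold direct sums). Throughout, $\{\mathcal H;\mathcal E;\mathcal D\}$ with $\mathcal E=\{\mathcal H_\ell:\ell\in\Omega\}$ is a fixed quantized domain. A unital $*$-homomorphism $\pi:\mathcal A\to C^*_{\mathcal F}(\mathcal G)$, for a quantized domain $\{\mathcal K;\mathcal F;\mathcal G\}$ with $\mathcal F=\{\mathcal K_\ell:\ell\in\Omega\}$, is local contractive if for each $\ell\in\Omega$ there is $\alpha\in\Lambda$ with $\|\pi(a)\|_\ell\le p_\alpha(a)$ for all $a\in\mathcal A$. Multilinear maps. Let $k\ge 1$ and $m=[\frac{k+1}{2}]$. For a $k$-linear map $\varphi:\mathcal A^k\to\mathcal B$, $\mathcal B=C^*_{\mathcal E}(\mathcal D)$ with seminorms $q_\ell=\|\cdot\|_\ell$, its amplification $\varphi_n:M_n(\mathcal A)^k\to M_n(\mathcal B)$ is $\varphi_n(A_1,\dots,A_k)=\big[\sum_{r_1,\dots,r_{k-1}=1}^n\varphi(a_{1,ir_1},a_{2,r_1r_2},\dots,a_{k,r_{k-1}j})\big]_{i,j=1}^n$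 for $A_t=[a_{t,ij}]$. $\varphi$ is symmetric if $\varphi(a_1,\dots,a_k)^*=\varphi(a_k^*,\dots,a_1^* )$ for all $a_i$. $\varphi$ is invariant if, for $k=2m-1$, $\varphi(a_1c_1,\dots,a_{m-1}c_{m-1},a_m,a_{m+1},\dots,a_{2m-1})=\varphi(a_1,\dots,a_{m-1},a_m,c_{m-1}a_{m+1},\dots,c_1a_{2m-1})$, and for $k=2m$, $\varphi(a_1c_1,\dots,a_mc_m,a_{m+1},\dots,a_{2m})=\varphi(a_1,\dots,a_m,c_ma_{m+1},\dots,c_1a_{2m})$, for all $a_i,c_j\in\mathcal A$. $\varphi$ is local completely contractive if for each $\ell\in\Omega$ there is $\alpha_\ell\in\Lambda$ such that for all $n$ and $A_1,\dots,A_k\in M_n(\mathcal A)$, $q^n_\ell(\varphi_n(A_1,\dots,A_k))\le\max_i p^n_{\alpha_\ell}(A_i)$. $\varphi$ is local completely positive if for each $\ell\in\Omega$ there is $\alpha_\ell\in\Lambda$ such that for all $n$ and $A_1,\dots,A_k\in M_n(\mathcal A)$: $\varphi_n(A_1,\dots,A_k)\ge_\ell 0$ whenever $A_p^*=_{\alpha_\ell}A_{k+1-p}$ for $p=1,\dots,m$ and, if $k$ is odd, additionally $A_m\ge_{\alpha_\ell}0$; and $\varphi_n(A_1,\dots,A_k)=_\ell 0$ whenever $A_i=_{\alpha_\ell}0$ for some $i$. $ICPCC^s_{loc}(\mathcal A^k,\mathcal B)$ denotes the set of symmetric, invariant, local completely contractive and local completely positive $k$-linear maps $\mathcal A^k\to\mathcal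 B$. Stinespring triples. For $\varphi\in ICPCC^s_{loc}(\mathcal A^k,C^*_{\mathcal E}(\mathcal D))$, a Stinespring triple for $\varphi$ is $(\{\pi_p\}_{p=1}^m,V,\{\mathcal K;\mathcal F;\mathcal G\})$ where $\{\mathcal K;\mathcal F;\mathcal G\}$ is a quantized domain with $\mathcal F=\{\mathcal K_\ell:\ell\in\Omega\}$ (same index set $\Omega$), $V\in\mathcal B(\mathcal H,\mathcal K)$ is a contraction with $V(\mathcal H_\ell)\subseteq\mathcal K_\ell$ for all $\ell$, $\pi_1,\dots,\pi_m:\mathcal A\to C^*_{\mathcal F}(\mathcal G)$ are pairwise commuting unital local contractive $*$-homomorphisms, and for all $a_1,\dots,a_k\in\mathcal A$ and $h\in\mathcal D$: if $k=2m-1$, $\varphi(a_1,\dots,a_k)h=V^*\pi_1(a_m)\pi_2(a_{m-1}a_{m+1})\cdots\pi_m(a_1a_{2m-1})Vh$; if $k=2m$, $\varphi(a_1,\dots,a_k)h=V^*\pi_1(a_ma_{m+1})\pi_2(a_{m-1}a_{m+2})\cdots\pi_m(a_1a_{2m})Vh$. The triple is minimal if $\mathcal K_\ell=\overline{\operatorname{span}}\{\pi_1(a_1)\cdots\pi_m(a_m)Vh:a_p\in\mathcal A,\ h\in\mathcal H_\ell\}$ for every $\ell\in\Omega$. *)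

theory Defs
  imports "HOL-Analysis.Analysis"
begin

class complex_vector = ab_group_add +
  fixes scaleC :: "complex \<Rightarrow> 'a \<Rightarrow> 'a" (infixr \<open>*\<^sub>C\<close> 75)
  assumes scaleC_add_right: "c *\<^sub>C (x + y) = c *\<^sub>C x + c *\<^sub>C y"
    and scaleC_add_left: "(c + d) *\<^sub>C x = c *\<^sub>C x + d *\<^sub>C x"
    and scaleC_scaleC: "c *\<^sub>C (d *\<^sub>C x) = (c * d) *\<^sub>C x"
    and scaleC_one: "1 *\<^sub>C x = x"

text \<open>Complex inner product spaces; the inner product is linear in the first argument.\<close>
class complex_inner = complex_vector + real_normed_vector +
  fixes cinner :: "'a \<Rightarrow> 'a \<Rightarrow> complex"
  assumes scaleR_scaleC: "scaleR r x = complex_of_real r *\<^sub>C x"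
    and cinner_add_left: "cinner (x + y) z = cinner x z + cinner y z"
    and cinner_scaleC_left: "cinner (c *\<^sub>C x) y = c * cinner x y"
    and cinner_commute: "cinner y x = cnj (cinner x y)"
    and cinner_nonneg: "0 \<le> Re (cinner x x)"
    and cinner_eq_zero_iff: "cinner x x = 0 \<longleftrightarrow> x = 0"
    and norm_eq_sqrt_cinner: "norm x = sqrt (Re (cinner x x))"

class chilbert_space = complex_inner + complete_space

text \<open>Complex *-algebras with unit (the unit may equal zero).\<close>
class star_algebra = complex_vector + ring + monoid_mult +
  fixes star_op :: "'a \<Rightarrow> 'a"
  assumes scaleC_mult_left: "(c *\<^sub>C x) * y = c *\<^sub>C (x * y)"
    and scaleC_mult_right: "x * (c *\<^sub>C y) = c *\<^sub>C (x * y)"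
    and star_star: "star_op (star_op x) = x"
    and star_add: "star_op (x + y) = star_op x + star_op y"
    and star_scaleC: "star_op (c *\<^sub>C x) = cnj c *\<^sub>C star_op x"
    and star_mult: "star_op (x * y) = star_op y * star_op x"

text \<open>A unital locally C*-algebra: complete (every proper Cauchy filter converges), Hausdorff,
  w.r.t. an upward filtered family of C*-seminorms p indexed by the type 'i (= Lambda).\<close>
definition C_seminorm :: "('a::star_algebra \<Rightarrow> real) \<Rightarrow> bool" where
  "C_seminorm q \<longleftrightarrow> (\<forall>a. 0 \<le> q a) \<and> (\<forall>a b. q (a + b) \<le> q a + q b)
     \<and> (\<forall>c a. q (c *\<^sub>C a) = cmod c * q a) \<and> (\<forall>a b. q (a * b) \<le> q a * q b)
     \<and> (\<forall>a. q (star_op a * a) = (q a)\<^sup>2)"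

definition locally_C_star_algebra :: "('i \<Rightarrow> 'a::star_algebra \<Rightarrow> real) \<Rightarrow> bool" where
  "locally_C_star_algebra p \<longleftrightarrow>
     (\<forall>\<alpha>. C_seminorm (p \<alpha>))
   \<and> (\<forall>\<alpha> \<beta>. \<exists>\<gamma>. \<forall>a. p \<alpha> a \<le> p \<gamma> a \<and> p \<beta> a \<le> p \<gamma> a)
   \<and> (\<forall>a. (\<forall>\<alpha>. p \<alpha> a = 0) \<longrightarrow> a = 0)
   \<and> (\<forall>F. F \<noteq> bot \<and> (\<forall>\<alpha>. \<forall>e>0. \<exists>S. eventually (\<lambda>x. x \<in> S) F \<and> (\<forall>x\<in>S. \<forall>y\<in>S. p \<alpha> (x - y) < e))
          \<longrightarrow> (\<exists>x. \<forall>\<alpha>. \<forall>e>0. eventually (\<lambda>y. p \<alpha> (y - x) < e) F))"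

text \<open>Matrices over A are functions nat => nat => 'a, only entries with indices < n matter.\<close>
definition mstar :: "nat \<Rightarrow> (nat \<Rightarrow> nat \<Rightarrow> 'a::star_algebra) \<Rightarrow> nat \<Rightarrow> nat \<Rightarrow> 'a" where
  "mstar n X = (\<lambda>i j. star_op (X j i))"

definition mmult :: "nat \<Rightarrow> (nat \<Rightarrow> nat \<Rightarrow> 'a::star_algebra) \<Rightarrow> (nat \<Rightarrow> nat \<Rightarrow> 'a) \<Rightarrow> nat \<Rightarrow> nat \<Rightarrow> 'a" where
  "mmult n X Y = (\<lambda>i j. \<Sum>r<n. X i r * Y r j)"

text \<open>p^n_alpha(X): the C*-norm of the image of X in M_n(A_alpha), computed as the norm of X acting
  on the Hilbert module (A_alpha)^n: sup of p_alpha(b^* X c) over unit vectors b, c.\<close>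
definition mseminorm :: "('i \<Rightarrow> 'a::star_algebra \<Rightarrow> real) \<Rightarrow> 'i \<Rightarrow> nat \<Rightarrow> (nat \<Rightarrow> nat \<Rightarrow> 'a) \<Rightarrow> real" where
  "mseminorm p \<alpha> n X = Sup {p \<alpha> (\<Sum>i<n. \<Sum>j<n. star_op (b i) * X i j * c j) | b c.
       p \<alpha> (\<Sum>i<n. star_op (b i) * b i) \<le> 1 \<and> p \<alpha> (\<Sum>j<n. star_op (c j) * c j) \<le> 1}"

definition meq :: "('i \<Rightarrow> 'a::star_algebra \<Rightarrow> real) \<Rightarrow> 'i \<Rightarrow> nat \<Rightarrow> (nat \<Rightarrow> nat \<Rightarrow> 'a) \<Rightarrow> (nat \<Rightarrow> nat \<Rightarrow> 'a) \<Rightarrow> bool" where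
  "meq p \<alpha> n X Y \<longleftrightarrow> mseminorm p \<alpha> n (\<lambda>i j. X i j - Y i j) = 0"

text \<open>X >=_alpha 0: the image of X in M_n(A_alpha) is positive, i.e. of the form B^* B.\<close>
definition mpos :: "('i \<Rightarrow> 'a::star_algebra \<Rightarrow> real) \<Rightarrow> 'i \<Rightarrow> nat \<Rightarrow> (nat \<Rightarrow> nat \<Rightarrow> 'a) \<Rightarrow> bool" where
  "mpos p \<alpha> n X \<longleftrightarrow> (\<exists>B. meq p \<alpha> n X (mmult n (mstar n B) B))"

definition csubspace :: "'h::complex_vector set \<Rightarrow> bool" where
  "csubspace S \<longleftrightarrow> 0 \<in> S \<and> (\<forall>x\<in>S. \<forall>y\<in>S. x + y \<in> S) \<and> (\<forall>c. \<forall>x\<in>S. c *\<^sub>C x \<in> S)"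

definition closed_csubspace :: "'h::complex_inner set \<Rightarrow> bool" where
  "closed_csubspace S \<longleftrightarrow> csubspace S \<and> closed S"

definition cspan :: "'h::complex_vector set \<Rightarrow> 'h set" where
  "cspan X = \<Inter>{S. csubspace S \<and> X \<subseteq> S}"

definition cproj :: "'h::complex_inner set \<Rightarrow> 'h \<Rightarrow> 'h" where
  "cproj S x = (THE y. y \<in> S \<and> (\<forall>z\<in>S. cinner (x - y) z = 0))"

definition cadj :: "('h::complex_inner \<Rightarrow> 'k::complex_inner) \<Rightarrow> 'k \<Rightarrow> 'h" where
  "cadj V y = (THE x. \<forall>h. cinner (V h) y = cinner h x)"

text \<open>Quantized domain {Ht; E; union of E}, where the Hilbert space Ht is a closed subspace of the
  ambient type (for the fixed domain Ht = UNIV), indexed by the directed set 'l.\<close>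
definition qdomain :: "'h::chilbert_space set \<Rightarrow> ('l::preorder \<Rightarrow> 'h set) \<Rightarrow> bool" where
  "qdomain Ht E \<longleftrightarrow> closed_csubspace Ht \<and> (\<forall>l. closed_csubspace (E l) \<and> E l \<subseteq> Ht)
     \<and> (\<forall>l l'. l \<le> l' \<longrightarrow> E l \<subseteq> E l') \<and> closure (\<Union>(range E)) = Ht"

definition qdom :: "('l \<Rightarrow> 'h set) \<Rightarrow> 'h set" where
  "qdom E = \<Union>(range E)"

text \<open>Membership of T : D -> D in C*_E(D) (T represented by a total function; only its values on D matter).\<close>
definition in_CE :: "'h::chilbert_space set \<Rightarrow> ('l \<Rightarrow> 'h set) \<Rightarrow> ('h \<Rightarrow> 'h) \<Rightarrow> bool" where
  "in_CE Ht E T \<longleftrightarrow>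
     (\<forall>x\<in>qdom E. T x \<in> qdom E)
   \<and> (\<forall>x\<in>qdom E. \<forall>y\<in>qdom E. T (x + y) = T x + T y)
   \<and> (\<forall>c. \<forall>x\<in>qdom E. T (c *\<^sub>C x) = c *\<^sub>C T x)
   \<and> (\<forall>l. \<forall>x\<in>Ht. T (cproj (E l) x) = cproj (E l) (T (cproj (E l) x)))
   \<and> (\<forall>l. \<forall>x\<in>qdom E. cproj (E l) (T x) = T (cproj (E l) x))
   \<and> (\<forall>l. \<exists>C. \<forall>x\<in>E l. norm (T x) \<le> C * norm x)"

text \<open>S = T^* in C*_E(D), i.e. S is the restriction to D of the Hilbert space adjoint of T.\<close>
definition op_star_eq :: "'h::complex_inner set \<Rightarrow> ('h \<Rightarrow> 'h) \<Rightarrow> ('h \<Rightarrow> 'h) \<Rightarrow> bool" where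
  "op_star_eq D T S \<longleftrightarrow> (\<forall>x\<in>D. \<forall>y\<in>D. cinner (T x) y = cinner x (S y))"

definition vnorm :: "nat \<Rightarrow> (nat \<Rightarrow> 'h::complex_inner) \<Rightarrow> real" where
  "vnorm n h = sqrt (\<Sum>i<n. (norm (h i))\<^sup>2)"

definition matapp :: "nat \<Rightarrow> (nat \<Rightarrow> nat \<Rightarrow> 'h \<Rightarrow> 'h::complex_inner) \<Rightarrow> (nat \<Rightarrow> 'h) \<Rightarrow> nat \<Rightarrow> 'h" where
  "matapp n Y h = (\<lambda>i. \<Sum>j<n. Y i j (h j))"

definition mat_bound :: "('l \<Rightarrow> 'h::complex_inner set) \<Rightarrow> 'l \<Rightarrow> nat \<Rightarrow> (nat \<Rightarrow> nat \<Rightarrow> 'h \<Rightarrow> 'h) \<Rightarrow> real \<Rightarrow> bool" where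
  "mat_bound E l n Y c \<longleftrightarrow> (\<forall>h. (\<forall>i<n. h i \<in> E l) \<longrightarrow> vnorm n (matapp n Y h) \<le> c * vnorm n h)"

definition mat_pos :: "('l \<Rightarrow> 'h::complex_inner set) \<Rightarrow> 'l \<Rightarrow> nat \<Rightarrow> (nat \<Rightarrow> nat \<Rightarrow> 'h \<Rightarrow> 'h) \<Rightarrow> bool" where
  "mat_pos E l n Y \<longleftrightarrow> (\<forall>h. (\<forall>i<n. h i \<in> E l) \<longrightarrow>
     Im (\<Sum>i<n. cinner (matapp n Y h i) (h i)) = 0 \<and> 0 \<le> Re (\<Sum>i<n. cinner (matapp n Y h i) (h i)))"

definition mat_zero :: "('l \<Rightarrow> 'h::complex_inner set) \<Rightarrow> 'l \<Rightarrow> nat \<Rightarrow> (nat \<Rightarrow> nat \<Rightarrow> 'h \<Rightarrow> 'h) \<Rightarrow> bool" where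
  "mat_zero E l n Y \<longleftrightarrow> (\<forall>h. (\<forall>i<n. h i \<in> E l) \<longrightarrow> (\<forall>i<n. matapp n Y h i = 0))"

definition paths :: "nat \<Rightarrow> nat \<Rightarrow> nat \<Rightarrow> nat \<Rightarrow> (nat \<Rightarrow> nat) set" where
  "paths k n i j = {r. r 0 = i \<and> r k = j \<and> (\<forall>t. 0 < t \<and> t < k \<longrightarrow> r t < n) \<and> (\<forall>t>k. r t = 0)}"

text \<open>Amplification phi_n; a k-linear map is a function on lists of length k (0-based positions).\<close>
definition amp :: "('a list \<Rightarrow> 'h \<Rightarrow> 'h::complex_inner) \<Rightarrow> nat \<Rightarrow> nat \<Rightarrow> (nat \<Rightarrow> nat \<Rightarrow> 'a) list
                   \<Rightarrow> nat \<Rightarrow> nat \<Rightarrow> 'h \<Rightarrow> 'h" where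
  "amp \<phi> k n Xs = (\<lambda>i j h. \<Sum>r\<in>paths k n i j. \<phi> (map (\<lambda>t. (Xs ! t) (r t) (r (Suc t))) [0..<k]) h)"

definition multilinear_CE :: "('l \<Rightarrow> 'h::chilbert_space set) \<Rightarrow> nat \<Rightarrow> ('a::star_algebra list \<Rightarrow> 'h \<Rightarrow> 'h) \<Rightarrow> bool" where
  "multilinear_CE E k \<phi> \<longleftrightarrow> (\<forall>as. length as = k \<longrightarrow> in_CE UNIV E (\<phi> as)
     \<and> (\<forall>i<k. \<forall>a b c. \<forall>h\<in>qdom E.
          \<phi> (as[i := a + b]) h = \<phi> (as[i := a]) h + \<phi> (as[i := b]) h
        \<and> \<phi> (as[i := c *\<^sub>C a]) h = c *\<^sub>C \<phi> (as[i := a]) h))"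

definition symmetric_map :: "('l \<Rightarrow> 'h::chilbert_space set) \<Rightarrow> nat \<Rightarrow> ('a::star_algebra list \<Rightarrow> 'h \<Rightarrow> 'h) \<Rightarrow> bool" where
  "symmetric_map E k \<phi> \<longleftrightarrow> (\<forall>as. length as = k \<longrightarrow> op_star_eq (qdom E) (\<phi> as) (\<phi> (rev (map star_op as))))"

text \<open>Invariance: positions i < k div 2 (0-based) are multiplied on the right by c_i, and the mirror
  positions k-1-i on the left by c_i; this is both cases k = 2m-1 and k = 2m of the paper.\<close>
definition invariant_map :: "('l \<Rightarrow> 'h::chilbert_space set) \<Rightarrow> nat \<Rightarrow> ('a::star_algebra list \<Rightarrow> 'h \<Rightarrow> 'h) \<Rightarrow> bool" where
  "invariant_map E k \<phi> \<longleftrightarrow> (\<forall>as cs. length as = k \<longrightarrow> (\<forall>h\<in>qdom E.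
     \<phi> (map (\<lambda>j. if j < k div 2 then (as ! j) * cs j else as ! j) [0..<k]) h
   = \<phi> (map (\<lambda>j. if k - k div 2 \<le> j then cs (k - 1 - j) * (as ! j) else as ! j) [0..<k]) h))"

definition local_cc :: "('i \<Rightarrow> 'a::star_algebra \<Rightarrow> real) \<Rightarrow> ('l \<Rightarrow> 'h::chilbert_space set) \<Rightarrow> nat
                        \<Rightarrow> ('a list \<Rightarrow> 'h \<Rightarrow> 'h) \<Rightarrow> bool" where
  "local_cc p E k \<phi> \<longleftrightarrow> (\<forall>l. \<exists>\<alpha>. \<forall>n Xs. length Xs = k \<longrightarrow>
      mat_bound E l n (amp \<phi> k n Xs) (Max (set (map (mseminorm p \<alpha> n) Xs))))"

definition local_cp :: "('i \<Rightarrow> 'a::star_algebra \<Rightarrow> real) \<Rightarrow> ('l \<Rightarrow> 'h::chilbert_space set) \<Rightarrow> nat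
                        \<Rightarrow> ('a list \<Rightarrow> 'h \<Rightarrow> 'h) \<Rightarrow> bool" where
  "local_cp p E k \<phi> \<longleftrightarrow> (\<forall>l. \<exists>\<alpha>. \<forall>n Xs. length Xs = k \<longrightarrow>
      (((\<forall>q\<in>{1..(k+1) div 2}. meq p \<alpha> n (mstar n (Xs ! (q - 1))) (Xs ! (k - q)))
         \<and> (odd k \<longrightarrow> mpos p \<alpha> n (Xs ! ((k+1) div 2 - 1))))
        \<longrightarrow> mat_pos E l n (amp \<phi> k n Xs))
    \<and> ((\<exists>i<k. meq p \<alpha> n (Xs ! i) (\<lambda>_ _. 0)) \<longrightarrow> mat_zero E l n (amp \<phi> k n Xs)))"

definition ICPCC :: "('i \<Rightarrow> 'a::star_algebra \<Rightarrow> real) \<Rightarrow> ('l \<Rightarrow> 'h::chilbert_space set) \<Rightarrow> nat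
                     \<Rightarrow> ('a list \<Rightarrow> 'h \<Rightarrow> 'h) \<Rightarrow> bool" where
  "ICPCC p E k \<phi> \<longleftrightarrow> multilinear_CE E k \<phi> \<and> symmetric_map E k \<phi> \<and> invariant_map E k \<phi>
     \<and> local_cc p E k \<phi> \<and> local_cp p E k \<phi>"

primrec pi_prod :: "(nat \<Rightarrow> 'a \<Rightarrow> 'k \<Rightarrow> 'k) \<Rightarrow> nat \<Rightarrow> (nat \<Rightarrow> 'a) \<Rightarrow> 'k \<Rightarrow> 'k" where
  "pi_prod \<pi> 0 x v = v"
| "pi_prod \<pi> (Suc j) x v = pi_prod \<pi> j x (\<pi> (Suc j) (x (Suc j)) v)"

text \<open>The arguments of pi_1, ..., pi_m in the Stinespring formula (as is 0-based, q is 1-based).\<close>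
definition stine_args :: "nat \<Rightarrow> 'a::star_algebra list \<Rightarrow> nat \<Rightarrow> 'a" where
  "stine_args k as = (let m = (k + 1) div 2 in (\<lambda>q.
     if odd k then (if q = 1 then as ! (m - 1) else as ! (m - q) * as ! (m + q - 2))
     else as ! (m - q) * as ! (m + q - 1)))"

definition local_contractive_hom ::
  "('i \<Rightarrow> 'a::star_algebra \<Rightarrow> real) \<Rightarrow> 'k::chilbert_space set \<Rightarrow> ('l \<Rightarrow> 'k set) \<Rightarrow> ('a \<Rightarrow> 'k \<Rightarrow> 'k) \<Rightarrow> bool" where
  "local_contractive_hom p Kt F \<pi> \<longleftrightarrow>
     (\<forall>a. in_CE Kt F (\<pi> a))
   \<and> (\<forall>a b. \<forall>x\<in>qdom F. \<pi> (a + b) x = \<pi> a x + \<pi> b x)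
   \<and> (\<forall>c a. \<forall>x\<in>qdom F. \<pi> (c *\<^sub>C a) x = c *\<^sub>C \<pi> a x)
   \<and> (\<forall>a b. \<forall>x\<in>qdom F. \<pi> (a * b) x = \<pi> a (\<pi> b x))
   \<and> (\<forall>x\<in>qdom F. \<pi> 1 x = x)
   \<and> (\<forall>a. op_star_eq (qdom F) (\<pi> a) (\<pi> (star_op a)))
   \<and> (\<forall>l. \<exists>\<alpha>. \<forall>a. \<forall>x\<in>F l. norm (\<pi> a x) \<le> p \<alpha> a * norm x)"

definition stinespring_triple ::
  "('i \<Rightarrow> 'a::star_algebra \<Rightarrow> real) \<Rightarrow> ('l::preorder \<Rightarrow> 'h::chilbert_space set) \<Rightarrow> nat \<Rightarrow> ('a list \<Rightarrow> 'h \<Rightarrow> 'h)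
   \<Rightarrow> (nat \<Rightarrow> 'a \<Rightarrow> 'k \<Rightarrow> 'k) \<Rightarrow> ('h \<Rightarrow> 'k) \<Rightarrow> 'k::chilbert_space set \<Rightarrow> ('l \<Rightarrow> 'k set) \<Rightarrow> bool" where
  "stinespring_triple p E k \<phi> \<pi> V Kt F \<longleftrightarrow> (let m = (k + 1) div 2 in
     qdomain Kt F
   \<and> (\<forall>x y. V (x + y) = V x + V y) \<and> (\<forall>c x. V (c *\<^sub>C x) = c *\<^sub>C V x)
   \<and> (\<forall>h. norm (V h) \<le> norm h) \<and> (\<forall>h. V h \<in> Kt) \<and> (\<forall>l. V ` E l \<subseteq> F l)
   \<and> (\<forall>q\<in>{1..m}. local_contractive_hom p Kt F (\<pi> q))
   \<and> (\<forall>q\<in>{1..m}. \<forall>q'\<in>{1..m}. q \<noteq> q' \<longrightarrow>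
        (\<forall>a b. \<forall>x\<in>qdom F. \<pi> q a (\<pi> q' b x) = \<pi> q' b (\<pi> q a x)))
   \<and> (\<forall>as. length as = k \<longrightarrow> (\<forall>h\<in>qdom E. \<phi> as h = cadj V (pi_prod \<pi> m (stine_args k as) (V h)))))"

definition minimal_triple ::
  "('l \<Rightarrow> 'h::chilbert_space set) \<Rightarrow> nat \<Rightarrow> (nat \<Rightarrow> 'a \<Rightarrow> 'k \<Rightarrow> 'k) \<Rightarrow> ('h \<Rightarrow> 'k) \<Rightarrow> ('l \<Rightarrow> 'k::chilbert_space set) \<Rightarrow> bool" where
  "minimal_triple E k \<pi> V F \<longleftrightarrow> (\<forall>l. F l = closure (cspan
      {pi_prod \<pi> ((k + 1) div 2) x (V h) | x h. h \<in> E l}))"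

end

theory Submission
  imports Defs
begin

(* For each l let K'_l be the closed span of the vectors pi_1(a_1) ... pi_m(a_m) V h with h in H_l.
   It lies in K_l and contains V H_l (take all a_p = 1). Because the pi_p commute and are
   multiplicative, pi_p(a) sends such a vector to another one of the same form, so every K'_l is
   invariant under pi_p(a) and, with a^* in place of a, under its adjoint. Hence K'_l reduces each
   pi_p(a): the orthogonal projections onto the K'_l commute with it. Replacing the K_l by the K'_l,
   with the same V and pi_p, therefore gives a Stinespring triple with the same formula for phi,
   and it is minimal by construction. *)

lemma (in complex_vector) scaleC_zero_left [simp]: "0 *\<^sub>C x = 0"
  using scaleC_add_left[of 0 0 x] by simp

lemma (in complex_vector) scaleC_minus1_left: "(-1) *\<^sub>C x = - x"
  using scaleC_add_left[of "-1" 1 x] by (simp add: scaleC_one eq_neg_iff_add_eq_0)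

lemma csubspace_add: "csubspace S \<Longrightarrow> x \<in> S \<Longrightarrow> y \<in> S \<Longrightarrow> x + y \<in> S"
  and csubspace_scaleC: "csubspace S \<Longrightarrow> x \<in> S \<Longrightarrow> c *\<^sub>C x \<in> S"
  and csubspace_0: "csubspace S \<Longrightarrow> 0 \<in> S"
  unfolding csubspace_def by blast+

lemma csubspace_diff: "csubspace S \<Longrightarrow> x \<in> S \<Longrightarrow> y \<in> S \<Longrightarrow> x - y \<in> S"
  using csubspace_add[of S x "(-1) *\<^sub>C y"] csubspace_scaleC[of S y "-1"]
  by (simp add: scaleC_minus1_left)

lemma csubspace_scaleR: "csubspace (S :: 'h::complex_inner set) \<Longrightarrow> x \<in> S \<Longrightarrow> r *\<^sub>R x \<in> S"
  by (simp add: scaleR_scaleC csubspace_scaleC)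

context complex_inner
begin

lemma cinner_diff_left: "cinner (x - y) z = cinner x z - cinner y z"
  using cinner_add_left[of x "-y" z] cinner_scaleC_left[of "-1" y z]
  by (simp add: scaleC_minus1_left)

lemma cinner_add_right: "cinner x (y + z) = cinner x y + cinner x z"
  using cinner_commute[of x "y + z"]
  by (simp add: cinner_add_left cinner_commute[of y x] cinner_commute[of z x])

lemma cinner_diff_right: "cinner x (y - z) = cinner x y - cinner x z"
  using cinner_commute[of x "y - z"]
  by (simp add: cinner_diff_left cinner_commute[of y x] cinner_commute[of z x])

lemma cinner_scaleC_right: "cinner x (c *\<^sub>C y) = cnj c * cinner x y"
  using cinner_commute[of x "c *\<^sub>C y"] by (simp add: cinner_scaleC_left cinner_commute[of y x])

lemma Re_cinner_commute: "Re (cinner x y) = Re (cinner y x)"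
  using cinner_commute[of x y] by simp

lemma power2_norm_eq_cinner: "(norm x)\<^sup>2 = Re (cinner x x)"
  by (simp add: norm_eq_sqrt_cinner cinner_nonneg)

lemma norm_scaleC: "norm (c *\<^sub>C x) = cmod c * norm x"
proof -
  have "cinner (c *\<^sub>C x) (c *\<^sub>C x) = (c * cnj c) * cinner x x"
    by (simp add: cinner_scaleC_left cinner_scaleC_right)
  also have "c * cnj c = of_real ((cmod c)\<^sup>2)"
    using complex_norm_square[of c] by simp
  finally have "cinner (c *\<^sub>C x) (c *\<^sub>C x) = of_real ((cmod c)\<^sup>2) * cinner x x" .
  then have "(norm (c *\<^sub>C x))\<^sup>2 = (cmod c * norm x)\<^sup>2"
    by (simp add: power2_norm_eq_cinner power_mult_distrib)
  then show ?thesis by (simp add: power2_eq_iff_nonneg)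
qed

lemma parallelogram_law:
  "(norm (x + y))\<^sup>2 + (norm (x - y))\<^sup>2 = 2 * (norm x)\<^sup>2 + 2 * (norm y)\<^sup>2"
  by (simp add: power2_norm_eq_cinner cinner_add_left cinner_add_right cinner_diff_left
      cinner_diff_right)

lemma power2_norm_diff_scaleR:
  "(norm (x - t *\<^sub>R y))\<^sup>2 = (norm x)\<^sup>2 - 2 * t * Re (cinner x y) + t\<^sup>2 * (norm y)\<^sup>2"
  unfolding power2_norm_eq_cinner
  by (simp add: cinner_diff_left cinner_diff_right scaleR_scaleC cinner_scaleC_left
      cinner_scaleC_right Re_cinner_commute[of y x] power2_eq_square algebra_simps)

end

section \<open>Orthogonal projection\<close>

(* The class chilbert_space is not an instance of real_inner, so the projection theorem of
   HOL-Analysis does not apply and is proved here. *)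

lemma quadratic_nonneg_imp_linear_coeff_zero:
  fixes a b :: real
  assumes "\<And>t. 0 \<le> t\<^sup>2 * b - 2 * t * a"
  shows "a = 0"
proof -
  have "b \<ge> 0" using assms[of 1] assms[of "-1"] by simp
  define t where "t = a / (b + 1)"
  have ta: "t * (b + 1) = a" unfolding t_def using \<open>b \<ge> 0\<close> by simp
  have "(b + 1)\<^sup>2 * (t\<^sup>2 * b - 2 * t * a) = - (a\<^sup>2 * (b + 2))"
    unfolding ta[symmetric] by (simp add: power2_eq_square algebra_simps)
  moreover have "0 \<le> (b + 1)\<^sup>2 * (t\<^sup>2 * b - 2 * t * a)" using assms[of t] by simp
  ultimately have "a\<^sup>2 * (b + 2) \<le> 0" by linarith
  then show ?thesis
    using \<open>b \<ge> 0\<close> by (simp add: mult_le_0_iff)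
qed

lemma closest_point_orthogonal:
  assumes S: "csubspace S" and y: "y \<in> S"
    and closest: "\<And>z. z \<in> S \<Longrightarrow> norm (x - y) \<le> norm (x - z)" and z: "z \<in> S"
  shows "cinner (x - y) z = 0"
proof -
  have Re_zero: "Re (cinner (x - y) z') = 0" if z': "z' \<in> S" for z'
  proof (rule quadratic_nonneg_imp_linear_coeff_zero)
    fix t :: real
    have "y + t *\<^sub>R z' \<in> S" using S y z' by (simp add: csubspace_add csubspace_scaleR)
    from closest[OF this] have "(norm (x - y))\<^sup>2 \<le> (norm ((x - y) - t *\<^sub>R z'))\<^sup>2"
      by (simp add: algebra_simps)
    then show "0 \<le> t\<^sup>2 * (norm z')\<^sup>2 - 2 * t * Re (cinner (x - y) z')"
      by (simp add: power2_norm_diff_scaleR)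
  qed
  have "Im (cinner (x - y) z) = Re (cinner (x - y) (\<i> *\<^sub>C z))"
    by (simp add: cinner_scaleC_right)
  also have "\<dots> = 0" using Re_zero csubspace_scaleC[OF S z] by blast
  finally show ?thesis using Re_zero[OF z] by (simp add: complex_eq_iff)
qed

lemma closest_point_midpoint_bound:
  fixes x :: "'h::complex_inner"
  assumes S: "csubspace S" and d: "\<And>s. s \<in> S \<Longrightarrow> d \<le> norm (x - s)" "0 \<le> d"
    and u: "u \<in> S" and v: "v \<in> S"
  shows "(norm (u - v))\<^sup>2 \<le> 2 * (norm (x - u))\<^sup>2 + 2 * (norm (x - v))\<^sup>2 - 4 * d\<^sup>2"
proof -
  have "(1/2) *\<^sub>R (u + v) \<in> S" using S u v by (simp add: csubspace_add csubspace_scaleR)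
  then have "d\<^sup>2 \<le> (norm (x - (1/2) *\<^sub>R (u + v)))\<^sup>2"
    using d by (simp add: power_mono)
  also have "x - (1/2) *\<^sub>R (u + v) = (1/2) *\<^sub>R ((x - u) + (x - v))"
    by (simp add: algebra_simps flip: scaleR_add_left)
  finally have "4 * d\<^sup>2 \<le> (norm ((x - u) + (x - v)))\<^sup>2"
    by (simp add: power2_eq_square)
  moreover have "(norm ((x - u) + (x - v)))\<^sup>2 + (norm (u - v))\<^sup>2
      = 2 * (norm (x - u))\<^sup>2 + 2 * (norm (x - v))\<^sup>2"
    using parallelogram_law[of "x - u" "x - v"] by (simp add: norm_minus_commute)
  ultimately show ?thesis by linarith
qed

lemma csubspace_closest_point_exists:
  fixes x :: "'h::chilbert_space"
  assumes "closed_csubspace S"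
  shows "\<exists>y\<in>S. \<forall>z\<in>S. norm (x - y) \<le> norm (x - z)"
proof -
  have S: "csubspace S" "closed S" using assms unfolding closed_csubspace_def by auto
  define d where "d = infdist x S"
  have d_le: "d \<le> norm (x - s)" if "s \<in> S" for s
    using infdist_le[OF that, of x] unfolding d_def dist_norm .
  have "0 \<le> d" unfolding d_def by (rule infdist_nonneg)
  have "\<exists>s\<in>S. (norm (x - s))\<^sup>2 < d\<^sup>2 + inverse (real (Suc n))" for n
  proof -
    let ?a = "d\<^sup>2 + inverse (real (Suc n))"
    have "S \<noteq> {}" using csubspace_0[OF S(1)] by blast
    moreover have "bdd_below ((\<lambda>s. norm (x - s)) ` S)" by (rule bdd_belowI2[of _ 0]) simp
    moreover have "d = (INF s\<in>S. norm (x - s))"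
      unfolding d_def infdist_notempty[OF \<open>S \<noteq> {}\<close>] dist_norm ..
    moreover have "d < sqrt ?a" by (rule real_less_rsqrt) simp
    ultimately obtain s where "s \<in> S" "norm (x - s) < sqrt ?a"
      using cINF_less_iff by metis
    moreover have "(norm (x - s))\<^sup>2 < (sqrt ?a)\<^sup>2" if "norm (x - s) < sqrt ?a"
      using that by (intro power_strict_mono) auto
    ultimately show ?thesis by auto
  qed
  then obtain s where s: "\<And>n. s n \<in> S"
    and s_close: "\<And>n. (norm (x - s n))\<^sup>2 < d\<^sup>2 + inverse (real (Suc n))"
    by metis
  have "Cauchy s"
  proof (rule CauchyI)
    fix e :: real assume "0 < e"
    then have "0 < e\<^sup>2 / 4" by simp
    then obtain M where M: "inverse (real (Suc M)) < e\<^sup>2 / 4" using reals_Archimedean by blast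
    have "norm (s m - s n) < e" if "M \<le> m" "M \<le> n" for m n
    proof -
      have "inverse (real (Suc m)) \<le> inverse (real (Suc M))"
        "inverse (real (Suc n)) \<le> inverse (real (Suc M))"
        using that by (simp_all add: le_imp_inverse_le)
      then have "(norm (s m - s n))\<^sup>2 < e\<^sup>2"
        using closest_point_midpoint_bound[OF S(1) d_le \<open>0 \<le> d\<close> s s, of m n]
          s_close[of m] s_close[of n] M by linarith
      then show ?thesis using \<open>0 < e\<close> by (simp add: power2_less_imp_less)
    qed
    then show "\<exists>M. \<forall>m\<ge>M. \<forall>n\<ge>M. norm (s m - s n) < e" by blast
  qed
  then obtain y where "s \<longlonglongrightarrow> y" using Cauchy_convergent_iff convergent_def by blast
  then have "y \<in> S" using closed_sequentially[of S s y] S(2) s by blast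
  have "(\<lambda>n. (norm (x - s n))\<^sup>2) \<longlonglongrightarrow> (norm (x - y))\<^sup>2"
    by (intro tendsto_intros \<open>s \<longlonglongrightarrow> y\<close>)
  moreover have "(\<lambda>n. d\<^sup>2 + inverse (real (Suc n))) \<longlonglongrightarrow> d\<^sup>2 + 0"
    by (intro tendsto_intros LIMSEQ_inverse_real_of_nat)
  ultimately have "(norm (x - y))\<^sup>2 \<le> d\<^sup>2 + 0"
    by (rule LIMSEQ_le) (use s_close less_imp_le in blast)
  then have "norm (x - y) \<le> d" using power2_le_imp_le[of "norm (x - y)" d] \<open>0 \<le> d\<close> by simp
  then show ?thesis using \<open>y \<in> S\<close> d_le order_trans by blast
qed

lemma cproj_unique:
  fixes x :: "'h::chilbert_space"
  assumes S: "closed_csubspace S" and y: "y \<in> S" "\<forall>z\<in>S. cinner (x - y) z = 0"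
  shows "cproj S x = y"
  unfolding cproj_def
proof (rule the_equality)
  show "y \<in> S \<and> (\<forall>z\<in>S. cinner (x - y) z = 0)" using y by blast
next
  fix y' assume y': "y' \<in> S \<and> (\<forall>z\<in>S. cinner (x - y') z = 0)"
  have "y - y' \<in> S" using S y y' unfolding closed_csubspace_def by (blast intro: csubspace_diff)
  then have "cinner (y - y') (y - y') = cinner (x - y') (y - y') - cinner (x - y) (y - y')"
    by (simp add: cinner_diff_left)
  also have "\<dots> = 0" using y y' \<open>y - y' \<in> S\<close> by simp
  finally show "y' = y" by (simp add: cinner_eq_zero_iff)
qed

lemma cproj_in:
  fixes x :: "'h::chilbert_space"
  assumes S: "closed_csubspace S"
  shows "cproj S x \<in> S" "\<forall>z\<in>S. cinner (x - cproj S x) z = 0"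
proof -
  obtain y where "y \<in> S" "\<forall>z\<in>S. norm (x - y) \<le> norm (x - z)"
    using csubspace_closest_point_exists[OF S] by blast
  moreover have "csubspace S" using S unfolding closed_csubspace_def by blast
  ultimately have "\<forall>z\<in>S. cinner (x - y) z = 0" by (blast intro: closest_point_orthogonal)
  with cproj_unique[OF S \<open>y \<in> S\<close> this] \<open>y \<in> S\<close>
  show "cproj S x \<in> S" "\<forall>z\<in>S. cinner (x - cproj S x) z = 0" by auto
qed

lemma cproj_id:
  fixes x :: "'h::chilbert_space"
  shows "closed_csubspace S \<Longrightarrow> x \<in> S \<Longrightarrow> cproj S x = x"
  using cproj_unique[of S x x] cinner_diff_left[of x x] by simp

lemma csubspace_cspan: "csubspace (cspan X)"
  unfolding cspan_def csubspace_def by blast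

lemma cspan_superset: "X \<subseteq> cspan X"
  unfolding cspan_def by blast

lemma cspan_minimal: "csubspace S \<Longrightarrow> X \<subseteq> S \<Longrightarrow> cspan X \<subseteq> S"
  unfolding cspan_def by blast

lemma cspan_mono: "X \<subseteq> Y \<Longrightarrow> cspan X \<subseteq> cspan Y"
  using cspan_minimal[OF csubspace_cspan] cspan_superset by blast

lemma bounded_linear_scaleC: "bounded_linear (\<lambda>x::'h::complex_inner. c *\<^sub>C x)"
  by (rule bounded_linear_intro[where K="cmod c"])
    (simp_all add: scaleC_add_right scaleR_scaleC scaleC_scaleC mult.commute norm_scaleC)

lemma csubspace_closure:
  fixes S :: "'h::complex_inner set"
  assumes S: "csubspace S"
  shows "csubspace (closure S)"
  unfolding csubspace_def
proof (intro conjI ballI allI)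
  show "0 \<in> closure S" using S csubspace_0 closure_subset by blast
next
  fix x y assume "x \<in> closure S" "y \<in> closure S"
  then obtain f g where "\<And>n. f n \<in> S" "f \<longlonglongrightarrow> x" "\<And>n. g n \<in> S" "g \<longlonglongrightarrow> y"
    unfolding closure_sequential by blast
  then show "x + y \<in> closure S" unfolding closure_sequential
    by (intro exI[of _ "\<lambda>n. f n + g n"]) (simp add: S csubspace_add tendsto_add)
next
  fix c x assume "x \<in> closure S"
  then obtain f where "\<And>n. f n \<in> S" "f \<longlonglongrightarrow> x"
    unfolding closure_sequential by blast
  then show "c *\<^sub>C x \<in> closure S" unfolding closure_sequential
    by (intro exI[of _ "\<lambda>n. c *\<^sub>C f n"])
      (simp add: S csubspace_scaleC bounded_linear.tendsto[OF bounded_linear_scaleC])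
qed

lemma closed_csubspace_closure_cspan:
  "closed_csubspace (closure (cspan (X :: 'h::complex_inner set)))"
  unfolding closed_csubspace_def by (simp add: csubspace_closure csubspace_cspan)

lemma csubspace_Union_directed:
  fixes F :: "'l::preorder \<Rightarrow> 'h::complex_vector set"
  assumes sub: "\<And>l. csubspace (F l)" and mono: "\<And>l l'. l \<le> l' \<Longrightarrow> F l \<subseteq> F l'"
    and directed: "\<forall>l1 l2 :: 'l::preorder. \<exists>l3. l1 \<le> l3 \<and> l2 \<le> l3"
  shows "csubspace (\<Union> (range F))"
  unfolding csubspace_def
proof (intro conjI ballI allI)
  show "0 \<in> \<Union> (range F)" using csubspace_0[OF sub] by blast
next
  fix x y assume "x \<in> \<Union> (range F)" "y \<in> \<Union> (range F)"
  then obtain l1 l2 where "x \<in> F l1" "y \<in> F l2" by blast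
  moreover obtain l3 where "l1 \<le> l3" "l2 \<le> l3" using directed by blast
  ultimately have "x + y \<in> F l3" using mono csubspace_add[OF sub] by blast
  then show "x + y \<in> \<Union> (range F)" by blast
next
  fix c x assume "x \<in> \<Union> (range F)"
  then show "c *\<^sub>C x \<in> \<Union> (range F)" using csubspace_scaleC[OF sub] by blast
qed

lemma cspan_invariant:
  assumes A: "csubspace A" and GA: "G \<subseteq> A" and TG: "T ` G \<subseteq> cspan G"
    and add: "\<And>x y. x \<in> A \<Longrightarrow> y \<in> A \<Longrightarrow> T (x + y) = T x + T y"
    and scale: "\<And>c x. x \<in> A \<Longrightarrow> T (c *\<^sub>C x) = c *\<^sub>C T x"
  shows "T ` cspan G \<subseteq> cspan G"
proof -
  define S where "S = {y \<in> A. T y \<in> cspan G}"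
  have "T 0 = 0" using add[of 0 0] csubspace_0[OF A] by simp
  then have "csubspace S"
    unfolding csubspace_def S_def
    using A add scale csubspace_cspan[of G]
    by (auto intro: csubspace_add csubspace_scaleC csubspace_0)
  moreover have "G \<subseteq> S" unfolding S_def using GA TG by blast
  ultimately show ?thesis using cspan_minimal unfolding S_def by blast
qed

lemma bounded_map_image_closure_subset:
  fixes T :: "'a::real_normed_vector \<Rightarrow> 'b::real_normed_vector"
  assumes A: "closed A" and BA: "B \<subseteq> A" and TB: "T ` B \<subseteq> C"
    and diff: "\<And>x y. x \<in> A \<Longrightarrow> y \<in> A \<Longrightarrow> x - y \<in> A \<and> T (x - y) = T x - T y"
    and bound: "\<And>x. x \<in> A \<Longrightarrow> norm (T x) \<le> K * norm x"
  shows "T ` closure B \<subseteq> closure C"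
proof
  fix z assume "z \<in> T ` closure B"
  then obtain y where z: "z = T y" and "y \<in> closure B" by blast
  then obtain f where f: "\<And>n. f n \<in> B" "f \<longlonglongrightarrow> y" unfolding closure_sequential by blast
  have "y \<in> A" using \<open>y \<in> closure B\<close> A BA closure_minimal by blast
  have "f n \<in> A" for n using f(1) BA by blast
  have "(\<lambda>n. norm (f n - y)) \<longlonglongrightarrow> 0" using f(2) tendsto_norm_zero LIM_zero by blast
  then have lim: "(\<lambda>n. K * norm (f n - y)) \<longlonglongrightarrow> 0" by (rule tendsto_mult_right_zero)
  have "\<forall>n. norm (T (f n) - T y) \<le> K * norm (f n - y)"
    using diff \<open>\<And>n. f n \<in> A\<close> \<open>y \<in> A\<close> bound by metis
  then have "(\<lambda>n. T (f n) - T y) \<longlonglongrightarrow> 0"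
    by (rule Lim_null_comparison[OF always_eventually lim])
  then have "(\<lambda>n. T (f n)) \<longlonglongrightarrow> T y" by (rule LIM_zero_cancel)
  moreover have "T (f n) \<in> C" for n using f(1) TB by blast
  ultimately show "z \<in> closure C"
    unfolding z closure_sequential by (intro exI[of _ "\<lambda>n. T (f n)"]) simp
qed

section \<open>Products of commuting representations\<close>

lemma pi_prod_closed:
  assumes "\<And>q a v. q \<in> {1..m} \<Longrightarrow> v \<in> D \<Longrightarrow> \<pi> q a v \<in> D"
  shows "j \<le> m \<Longrightarrow> v \<in> D \<Longrightarrow> pi_prod \<pi> j x v \<in> D"
  by (induction j arbitrary: v) (simp_all add: assms)

lemma pi_prod_cong: "(\<And>i. i \<in> {1..j} \<Longrightarrow> x i = y i) \<Longrightarrow> pi_prod \<pi> j x v = pi_prod \<pi> j y v"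
  by (induction j arbitrary: v) simp_all

lemma pi_prod_one:
  assumes "\<And>q v. q \<in> {1..m} \<Longrightarrow> v \<in> D \<Longrightarrow> \<pi> q 1 v = v"
  shows "j \<le> m \<Longrightarrow> v \<in> D \<Longrightarrow> pi_prod \<pi> j (\<lambda>_. 1) v = v"
  by (induction j arbitrary: v) (simp_all add: assms)

locale commuting_actions =
  fixes \<pi> :: "nat \<Rightarrow> 'a::monoid_mult \<Rightarrow> 'k \<Rightarrow> 'k" and m :: nat and D :: "'k set"
  assumes closed: "\<And>q a v. q \<in> {1..m} \<Longrightarrow> v \<in> D \<Longrightarrow> \<pi> q a v \<in> D"
    and commute: "\<And>q q' a b v. q \<in> {1..m} \<Longrightarrow> q' \<in> {1..m} \<Longrightarrow> q \<noteq> q' \<Longrightarrow> v \<in> D \<Longrightarrow>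
      \<pi> q a (\<pi> q' b v) = \<pi> q' b (\<pi> q a v)"
    and mult: "\<And>q a b v. q \<in> {1..m} \<Longrightarrow> v \<in> D \<Longrightarrow> \<pi> q (a * b) v = \<pi> q a (\<pi> q b v)"
begin

lemma pi_prod_commute:
  "q \<le> m \<Longrightarrow> j < q \<Longrightarrow> v \<in> D \<Longrightarrow> \<pi> q a (pi_prod \<pi> j x v) = pi_prod \<pi> j x (\<pi> q a v)"
proof (induction j arbitrary: v)
  case (Suc j)
  then show ?case by (simp add: closed commute)
qed simp

(* Commutativity moves pi_q a past pi_1 ... pi_(q-1); multiplicativity absorbs it into the
   q-th factor. *)
lemma pi_prod_update:
  "1 \<le> q \<Longrightarrow> q \<le> j \<Longrightarrow> j \<le> m \<Longrightarrow> v \<in> D \<Longrightarrow>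
    \<pi> q a (pi_prod \<pi> j x v) = pi_prod \<pi> j (x(q := a * x q)) v"
proof (induction j arbitrary: v)
  case (Suc j)
  show ?case
  proof (cases "q = Suc j")
    case True
    then have "\<pi> q a (pi_prod \<pi> (Suc j) x v) = pi_prod \<pi> j x (\<pi> q (a * x q) v)"
      using Suc.prems by (simp add: pi_prod_commute closed mult)
    also have "\<dots> = pi_prod \<pi> (Suc j) (x(q := a * x q)) v"
      using True by (auto intro: pi_prod_cong)
    finally show ?thesis .
  next
    case False
    then show ?thesis using Suc by (simp add: closed)
  qed
qed simp

end

section \<open>Restricting a Stinespring triple to reducing subspaces\<close>

lemma qdomain_closed_csubspace: "qdomain Kt F \<Longrightarrow> closed_csubspace (F l)"
  unfolding qdomain_def by blast

lemma qdom_mono: "(\<And>l. F' l \<subseteq> F l) \<Longrightarrow> qdom F' \<subseteq> qdom F"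
  unfolding qdom_def by blast

lemma in_CE_invariant_subspace:
  assumes F: "qdomain Kt F" and T: "in_CE Kt F T" and x: "x \<in> F l"
  shows "T x \<in> F l"
proof -
  have Fl: "closed_csubspace (F l)" using F by (rule qdomain_closed_csubspace)
  have "x \<in> qdom F" using x unfolding qdom_def by blast
  then have "cproj (F l) (T x) = T (cproj (F l) x)" using T unfolding in_CE_def by blast
  also have "\<dots> = T x" using cproj_id[OF Fl x] by simp
  finally show ?thesis using cproj_in(1)[OF Fl, of "T x"] by simp
qed

(* Invariance under the adjoint S is what makes the projections onto the F' l commute with T. *)
lemma in_CE_reducing_subspaces:
  fixes T S :: "'k::chilbert_space \<Rightarrow> 'k"
  assumes T: "in_CE Kt F T" and adj: "op_star_eq (qdom F) T S"
    and cl: "\<And>l. closed_csubspace (F' l)" and sub: "\<And>l. F' l \<subseteq> F l"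
    and TF': "\<And>l. T ` F' l \<subseteq> F' l" and SF': "\<And>l. S ` F' l \<subseteq> F' l"
  shows "in_CE Kt' F' T"
proof -
  have qd: "qdom F' \<subseteq> qdom F" using sub by (rule qdom_mono)
  have add: "\<forall>x\<in>qdom F. \<forall>y\<in>qdom F. T (x + y) = T x + T y"
    and scale: "\<forall>c. \<forall>x\<in>qdom F. T (c *\<^sub>C x) = c *\<^sub>C T x"
    and bound: "\<forall>l. \<exists>C. \<forall>x\<in>F l. norm (T x) \<le> C * norm x"
    using T unfolding in_CE_def by blast+
  have TF'_mem: "T x \<in> F' l" if "x \<in> F' l" for x l using TF' that by blast
  have commute: "cproj (F' l) (T x) = T (cproj (F' l) x)" if x: "x \<in> qdom F'" for x l
  proof -
    define P where "P = cproj (F' l) x"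
    have P: "P \<in> F' l" unfolding P_def by (rule cproj_in(1)[OF cl])
    have "cinner (T x - T P) z = 0" if z: "z \<in> F' l" for z
    proof -
      have "S z \<in> F' l" using SF' z by blast
      have "x \<in> qdom F" "P \<in> qdom F" "z \<in> qdom F" using x P z qd unfolding qdom_def by auto
      then have "cinner (T x - T P) z = cinner (x - P) (S z)"
        using adj unfolding op_star_eq_def by (simp add: cinner_diff_left)
      also have "\<dots> = 0" using cproj_in(2)[OF cl, of l x] \<open>S z \<in> F' l\<close> unfolding P_def by blast
      finally show ?thesis .
    qed
    then show ?thesis using cproj_unique[OF cl TF'_mem[OF P]] unfolding P_def by blast
  qed
  show ?thesis
    unfolding in_CE_def
  proof (intro conjI ballI allI)
    fix l x
    show "T (cproj (F' l) x) = cproj (F' l) (T (cproj (F' l) x))"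
      using cproj_id[OF cl TF'_mem[OF cproj_in(1)[OF cl]]] by simp
    show "\<exists>C. \<forall>x\<in>F' l. norm (T x) \<le> C * norm x" using bound sub by blast
  next
    fix x assume "x \<in> qdom F'"
    then show "T x \<in> qdom F'" using TF'_mem unfolding qdom_def by blast
  qed (use add scale qd commute in blast)+
qed

lemma local_contractive_hom_restrict:
  assumes "local_contractive_hom p Kt F \<pi>" and sub: "\<And>l. F' l \<subseteq> F l"
    and "\<And>a. in_CE Kt' F' (\<pi> a)"
  shows "local_contractive_hom p Kt' F' \<pi>"
proof -
  have "qdom F' \<subseteq> qdom F" using sub by (rule qdom_mono)
  then show ?thesis
    using assms unfolding local_contractive_hom_def op_star_eq_def by (meson subsetD)
qed

lemma qdomain_closure_Union:
  fixes F :: "'l::preorder \<Rightarrow> 'k::chilbert_space set"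
  assumes cl: "\<And>l. closed_csubspace (F l)" and mono: "\<And>l l'. l \<le> l' \<Longrightarrow> F l \<subseteq> F l'"
    and directed: "\<forall>l1 l2 :: 'l. \<exists>l3. l1 \<le> l3 \<and> l2 \<le> l3"
  shows "qdomain (closure (\<Union> (range F))) F"
proof -
  have "csubspace (\<Union> (range F))"
    using cl mono directed unfolding closed_csubspace_def by (intro csubspace_Union_directed) auto
  then have "closed_csubspace (closure (\<Union> (range F)))"
    unfolding closed_csubspace_def by (simp add: csubspace_closure)
  moreover have "F l \<subseteq> closure (\<Union> (range F))" for l
    using closure_subset[of "\<Union> (range F)"] by blast
  ultimately show ?thesis unfolding qdomain_def using cl mono by blast
qed

lemma bounded_linear_image_dense_subset:
  assumes V: "bounded_linear V" and dense: "closure (\<Union> (range E)) = UNIV"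
    and VE: "\<And>l. V ` E l \<subseteq> F l"
  shows "V h \<in> closure (\<Union> (range F))"
proof -
  have "V ` \<Union> (range E) \<subseteq> closure (\<Union> (range F))"
    using VE closure_subset[of "\<Union> (range F)"] by blast
  then have "V ` closure (\<Union> (range E)) \<subseteq> closure (\<Union> (range F))"
    by (intro image_closure_subset linear_continuous_on V) simp_all
  then show ?thesis using dense by blast
qed

lemma stinespring_tripleD:
  assumes "stinespring_triple p E k \<phi> \<pi> V Kt F"
  shows "qdomain Kt F" and "V ` E l \<subseteq> F l"
    and "q \<in> {1..(k + 1) div 2} \<Longrightarrow> local_contractive_hom p Kt F (\<pi> q)"
    and "commuting_actions \<pi> ((k + 1) div 2) (qdom F)"
proof -
  show "qdomain Kt F" "V ` E l \<subseteq> F l"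
    and lch: "q \<in> {1..(k + 1) div 2} \<Longrightarrow> local_contractive_hom p Kt F (\<pi> q)" for q
    using assms unfolding stinespring_triple_def Let_def by blast+
  show "commuting_actions \<pi> ((k + 1) div 2) (qdom F)"
  proof
    fix q a v assume "q \<in> {1..(k + 1) div 2}" "v \<in> qdom F"
    moreover from lch[OF this(1)] have "in_CE Kt F (\<pi> q a)"
      unfolding local_contractive_hom_def by blast
    ultimately show "\<pi> q a v \<in> qdom F" unfolding in_CE_def by blast
  next
    fix q a b v assume "q \<in> {1..(k + 1) div 2}" "v \<in> qdom F"
    then show "\<pi> q (a * b) v = \<pi> q a (\<pi> q b v)"
      using lch unfolding local_contractive_hom_def by blast
  next
    fix q q' a b v assume "q \<in> {1..(k + 1) div 2}" "q' \<in> {1..(k + 1) div 2}" "q \<noteq> q'" "v \<in> qdom F"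
    then show "\<pi> q a (\<pi> q' b v) = \<pi> q' b (\<pi> q a v)"
      using assms unfolding stinespring_triple_def Let_def by blast
  qed
qed

lemma stinespring_triple_restrict:
  fixes F' :: "'l::preorder \<Rightarrow> 'k::chilbert_space set"
  assumes T: "stinespring_triple p E k \<phi> \<pi> V Kt F"
    and E: "qdomain UNIV E" and directed: "\<forall>l1 l2 :: 'l. \<exists>l3. l1 \<le> l3 \<and> l2 \<le> l3"
    and cl: "\<And>l. closed_csubspace (F' l)" and sub: "\<And>l. F' l \<subseteq> F l"
    and mono: "\<And>l l'. l \<le> l' \<Longrightarrow> F' l \<subseteq> F' l'"
    and VF': "\<And>l. V ` E l \<subseteq> F' l"
    and \<pi>F': "\<And>q a l. q \<in> {1..(k + 1) div 2} \<Longrightarrow> \<pi> q a ` F' l \<subseteq> F' l"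
  shows "stinespring_triple p E k \<phi> \<pi> V (closure (\<Union> (range F'))) F'"
proof -
  let ?Kt = "closure (\<Union> (range F'))"
  have "in_CE ?Kt F' (\<pi> q a)" if q: "q \<in> {1..(k + 1) div 2}" for q a
  proof (rule in_CE_reducing_subspaces[OF _ _ cl sub])
    show "in_CE Kt F (\<pi> q a)" "op_star_eq (qdom F) (\<pi> q a) (\<pi> q (star_op a))"
      using stinespring_tripleD(3)[OF T q] unfolding local_contractive_hom_def by blast+
  qed (use \<pi>F' q in blast)+
  then have lch: "\<forall>q\<in>{1..(k + 1) div 2}. local_contractive_hom p ?Kt F' (\<pi> q)"
    using local_contractive_hom_restrict[OF stinespring_tripleD(3)[OF T] sub] by blast
  have V: "\<forall>x y. V (x + y) = V x + V y" "\<forall>c x. V (c *\<^sub>C x) = c *\<^sub>C V x"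
    "\<forall>h. norm (V h) \<le> norm h"
    using T by (simp_all add: stinespring_triple_def Let_def)
  then have "bounded_linear V"
    by (intro bounded_linear_intro[where K=1]) (simp_all add: scaleR_scaleC)
  then have V_Kt: "\<forall>h. V h \<in> ?Kt"
    using bounded_linear_image_dense_subset VF' E unfolding qdomain_def by blast
  have "qdomain ?Kt F'" using cl mono directed by (rule qdomain_closure_Union)
  have "qdom F' \<subseteq> qdom F" using sub by (rule qdom_mono)
  moreover have
    "\<forall>q\<in>{1..(k + 1) div 2}. \<forall>q'\<in>{1..(k + 1) div 2}. q \<noteq> q' \<longrightarrow>
      (\<forall>a b. \<forall>x\<in>qdom F. \<pi> q a (\<pi> q' b x) = \<pi> q' b (\<pi> q a x))"
    using T by (simp add: stinespring_triple_def Let_def)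
  ultimately have commute:
    "\<forall>q\<in>{1..(k + 1) div 2}. \<forall>q'\<in>{1..(k + 1) div 2}. q \<noteq> q' \<longrightarrow>
      (\<forall>a b. \<forall>x\<in>qdom F'. \<pi> q a (\<pi> q' b x) = \<pi> q' b (\<pi> q a x))"
    by blast
  have "\<forall>as. length as = k \<longrightarrow>
      (\<forall>h\<in>qdom E. \<phi> as h = cadj V (pi_prod \<pi> ((k + 1) div 2) (stine_args k as) (V h)))"
    using T by (simp add: stinespring_triple_def Let_def)
  then show ?thesis
    unfolding stinespring_triple_def Let_def
    using \<open>qdomain ?Kt F'\<close> V V_Kt VF' lch commute by simp
qed

section \<open>The minimal Stinespring triple\<close>

definition cyclic_vectors ::
  "('l \<Rightarrow> 'h set) \<Rightarrow> nat \<Rightarrow> (nat \<Rightarrow> 'a \<Rightarrow> 'k \<Rightarrow> 'k) \<Rightarrow> ('h \<Rightarrow> 'k) \<Rightarrow> 'l \<Rightarrow> 'k set" where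
  "cyclic_vectors E k \<pi> V l = {pi_prod \<pi> ((k + 1) div 2) x (V h) | x h. h \<in> E l}"

definition cyclic_subspace ::
  "('l \<Rightarrow> 'h set) \<Rightarrow> nat \<Rightarrow> (nat \<Rightarrow> 'a \<Rightarrow> 'k \<Rightarrow> 'k) \<Rightarrow> ('h \<Rightarrow> 'k) \<Rightarrow> 'l \<Rightarrow> 'k::complex_inner set" where
  "cyclic_subspace E k \<pi> V l = closure (cspan (cyclic_vectors E k \<pi> V l))"

lemma cyclic_vectors_mono:
  "qdomain Ht E \<Longrightarrow> l \<le> l' \<Longrightarrow> cyclic_vectors E k \<pi> V l \<subseteq> cyclic_vectors E k \<pi> V l'"
  unfolding cyclic_vectors_def qdomain_def by blast

lemma cyclic_subspace_mono:
  "qdomain Ht E \<Longrightarrow> l \<le> l' \<Longrightarrow> cyclic_subspace E k \<pi> V l \<subseteq> cyclic_subspace E k \<pi> V l'"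
  unfolding cyclic_subspace_def by (intro closure_mono cspan_mono cyclic_vectors_mono)

context
  fixes k :: nat and Kt :: "'k::chilbert_space set"
    and p :: "'i \<Rightarrow> 'a::star_algebra \<Rightarrow> real" and E :: "'l::preorder \<Rightarrow> 'h::chilbert_space set"
    and \<phi> :: "'a list \<Rightarrow> 'h \<Rightarrow> 'h" and \<pi> :: "nat \<Rightarrow> 'a \<Rightarrow> 'k::chilbert_space \<Rightarrow> 'k"
    and V :: "'h \<Rightarrow> 'k" and F :: "'l \<Rightarrow> 'k set"
  assumes T: "stinespring_triple p E k \<phi> \<pi> V Kt F"
begin

interpretation commuting_actions \<pi> "(k + 1) div 2" "qdom F"
  by (rule stinespring_tripleD(4)[OF T])

lemma cyclic_vectors_subset: "cyclic_vectors E k \<pi> V l \<subseteq> F l"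
proof -
  have "\<pi> q a v \<in> F l" if "q \<in> {1..(k + 1) div 2}" "v \<in> F l" for q a v
    using stinespring_tripleD(1,3)[OF T] that unfolding local_contractive_hom_def
    by (blast intro: in_CE_invariant_subspace)
  then show ?thesis
    unfolding cyclic_vectors_def using stinespring_tripleD(2)[OF T]
    by (blast intro: pi_prod_closed[where D="F l"])
qed

lemma cyclic_subspace_subset: "cyclic_subspace E k \<pi> V l \<subseteq> F l"
proof -
  have "closed_csubspace (F l)"
    using stinespring_tripleD(1)[OF T] by (rule qdomain_closed_csubspace)
  then show ?thesis
    unfolding cyclic_subspace_def closed_csubspace_def
    by (intro closure_minimal cspan_minimal cyclic_vectors_subset) simp_all
qed

lemma image_V_subset_cyclic_vectors: "V ` E l \<subseteq> cyclic_vectors E k \<pi> V l"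
proof
  fix v assume "v \<in> V ` E l"
  then obtain h where h: "h \<in> E l" "v = V h" by blast
  have "V h \<in> qdom F" using stinespring_tripleD(2)[OF T] h(1) unfolding qdom_def by blast
  then have "pi_prod \<pi> ((k + 1) div 2) (\<lambda>_. 1) (V h) = V h"
    using stinespring_tripleD(3)[OF T] unfolding local_contractive_hom_def
    by (intro pi_prod_one[where D="qdom F" and m="(k + 1) div 2"]) auto
  then show "v \<in> cyclic_vectors E k \<pi> V l"
    unfolding cyclic_vectors_def using h by (intro CollectI exI[of _ "\<lambda>_. 1"] exI[of _ h]) simp
qed

lemma cyclic_vectors_invariant:
  assumes "q \<in> {1..(k + 1) div 2}"
  shows "\<pi> q a ` cyclic_vectors E k \<pi> V l \<subseteq> cyclic_vectors E k \<pi> V l"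
proof
  fix w assume "w \<in> \<pi> q a ` cyclic_vectors E k \<pi> V l"
  then obtain x h where h: "h \<in> E l" "w = \<pi> q a (pi_prod \<pi> ((k + 1) div 2) x (V h))"
    unfolding cyclic_vectors_def by blast
  have "V h \<in> qdom F" using stinespring_tripleD(2)[OF T] h(1) unfolding qdom_def by blast
  then have "w = pi_prod \<pi> ((k + 1) div 2) (x(q := a * x q)) (V h)"
    using assms h(2) pi_prod_update[of q "(k + 1) div 2" "V h" a x] by simp
  then show "w \<in> cyclic_vectors E k \<pi> V l" unfolding cyclic_vectors_def using h(1) by blast
qed

lemma cyclic_subspace_invariant:
  assumes q: "q \<in> {1..(k + 1) div 2}"
  shows "\<pi> q a ` cyclic_subspace E k \<pi> V l \<subseteq> cyclic_subspace E k \<pi> V l"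
proof -
  let ?G = "cyclic_vectors E k \<pi> V l"
  have Fl: "csubspace (F l)" "closed (F l)"
    using qdomain_closed_csubspace[OF stinespring_tripleD(1)[OF T]] unfolding closed_csubspace_def
    by blast+
  have T_qa: "in_CE Kt F (\<pi> q a)"
    using stinespring_tripleD(3)[OF T q] unfolding local_contractive_hom_def by blast
  have Fl_qdom: "F l \<subseteq> qdom F" unfolding qdom_def by blast
  have add: "\<pi> q a (x + y) = \<pi> q a x + \<pi> q a y" if "x \<in> F l" "y \<in> F l" for x y
    using T_qa that Fl_qdom unfolding in_CE_def by blast
  have scale: "\<pi> q a (c *\<^sub>C x) = c *\<^sub>C \<pi> q a x" if "x \<in> F l" for c x
    using T_qa that Fl_qdom unfolding in_CE_def by blast
  obtain K where bound: "\<And>x. x \<in> F l \<Longrightarrow> norm (\<pi> q a x) \<le> K * norm x"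
    using T_qa unfolding in_CE_def by blast
  have "\<pi> q a ` cspan ?G \<subseteq> cspan ?G"
    using cyclic_vectors_subset cyclic_vectors_invariant[OF q] cspan_superset
    by (intro cspan_invariant[OF Fl(1)] add scale) blast+
  moreover have "\<pi> q a (x - y) = \<pi> q a x - \<pi> q a y" if "x \<in> F l" "y \<in> F l" for x y
    using add[of "x - y" y] that csubspace_diff[OF Fl(1)] by simp
  ultimately show ?thesis
    unfolding cyclic_subspace_def
    using Fl bound csubspace_diff cspan_minimal[OF Fl(1) cyclic_vectors_subset]
    by (intro bounded_map_image_closure_subset[where A="F l"]) auto
qed

end

theorem proposition4p2:
  fixes p :: "'i \<Rightarrow> 'a::star_algebra \<Rightarrow> real"
    and E :: "'l::preorder \<Rightarrow> 'h::chilbert_space set"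
    and k :: nat
    and \<phi> :: "'a list \<Rightarrow> 'h \<Rightarrow> 'h"
    and \<pi> :: "nat \<Rightarrow> 'a \<Rightarrow> 'k::chilbert_space \<Rightarrow> 'k"
    and V :: "'h \<Rightarrow> 'k"
    and F :: "'l \<Rightarrow> 'k set"
  assumes "locally_C_star_algebra p"
    and "\<forall>l1 l2 :: 'l. \<exists>l3. l1 \<le> l3 \<and> l2 \<le> l3"
    and "qdomain (UNIV :: 'h set) E"
    and "1 \<le> k"
    and "ICPCC p E k \<phi>"
    and "stinespring_triple p E k \<phi> \<pi> V UNIV F"
  shows "\<exists>Kt F' \<pi>' V'. stinespring_triple p E k \<phi> \<pi>' V' Kt F'
           \<and> (\<forall>l. F' l \<subseteq> F l) \<and> minimal_triple E k \<pi>' V' F'"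
proof -
  let ?K = "cyclic_subspace E k \<pi> V"
  have "stinespring_triple p E k \<phi> \<pi> V (closure (\<Union> (range ?K))) ?K"
  proof (rule stinespring_triple_restrict[OF assms(6,3,2)])
    fix l l' :: 'l
    show "closed_csubspace (?K l)"
      unfolding cyclic_subspace_def by (rule closed_csubspace_closure_cspan)
    show "?K l \<subseteq> F l" using assms(6) by (rule cyclic_subspace_subset)
    show "l \<le> l' \<Longrightarrow> ?K l \<subseteq> ?K l'" using assms(3) by (rule cyclic_subspace_mono)
    show "V ` E l \<subseteq> ?K l"
      using image_V_subset_cyclic_vectors[OF assms(6)] cspan_superset closure_subset
      unfolding cyclic_subspace_def by blast
    show "\<pi> q a ` ?K l \<subseteq> ?K l" if "q \<in> {1..(k + 1) div 2}" for q a
      using assms(6) that by (rule cyclic_subspace_invariant)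
  qed
  moreover have "minimal_triple E k \<pi> V ?K"
    unfolding minimal_triple_def cyclic_subspace_def cyclic_vectors_def by simp
  ultimately show ?thesis using cyclic_subspace_subset[OF assms(6)] by blast
qed

end
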